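(* Let $X$ and $Y$ be separable Banach spaces and assume $X$ is a quotient of $Y$ (there is a bounded linear operator from $Y$ onto $X$). Then $\phi_{\mathrm{NC}_{\ell_1}}(X)\le\phi_{\mathrm{NC}_{\ell_1}}(Y)$.
   Context: Bourgain's $\ell_1$ index: for a separable Banach space $Y$ and $\delta\ge1$, let $\mathbf{T}(Y,\delta)$ be the tree of all finite sequences $(y_n)_{n=0}^k$ in $Y$ (including the empty sequence) such that $\frac1\delta\sum_{n=0}^k|a_n|\le\|\sum_{n=0}^k a_ny_n\|\le\delta\sum_{n=0}^k|a_n|$ for all reals $a_0,\dots,a_k$. For a well-founded tree $T$, $T'=\{s\in T:\exists t\in T,\ s\sqsubset t\}$, iterated derivatives $T^\xi$ are defined by transfinite recursion (intersections at limits), and $o(T)$ is the least $\xi$ with $T^\xi=\emptyset$. Set $\phi_{\mathrm{NC}_{\ell_1}}(Y)=\omega_1$ if $Y$ contains an isomorphic copy of $\ell_1$, and otherwise $\phi_{\mathrm{NC}_{\ell_1}}(Y)=\sup_{\delta\ge1}o(\mathbf{T}(Y,\delta))$. *)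

theory Defs
  imports "HOL-Analysis.Analysis" "HOL-Library.Sublist"
begin

(* Bourgain's l_1 tree T(Y,delta): finite sequences (lists) (y_0,...,y_k) that are
   delta-equivalent to the unit vector basis of l_1^{k+1}; the empty list is included. *)
definition l1_tree :: "real \<Rightarrow> ('y::real_normed_vector) list set" where
  "l1_tree \<delta> = {ys. \<forall>a::nat \<Rightarrow> real.
      (1/\<delta>) * (\<Sum>n<length ys. \<bar>a n\<bar>) \<le> norm (\<Sum>n<length ys. a n *\<^sub>R ys ! n)
    \<and> norm (\<Sum>n<length ys. a n *\<^sub>R ys ! n) \<le> \<delta> * (\<Sum>n<length ys. \<bar>a n\<bar>)}"

definition tree_deriv :: "'a list set \<Rightarrow> 'a list set" where
  "tree_deriv T = {s \<in> T. \<exists>t\<in>T. strict_prefix s t}"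

(* Iterated derivatives T^xi, indexed along a well-order r: for i in Field r, the stage
   deriv_iter r T i is T^xi where xi is the order type of the initial segment of r below i.
   Uniform transfinite recursion: T^xi = T \<inter> \<Inter>_{eta<xi} (T^eta)'
   (gives T^0 = T, T^(eta+1) = (T^eta)', T^lambda = \<Inter>_{eta<lambda} T^eta). *)
definition deriv_iter :: "'i rel \<Rightarrow> 'a list set \<Rightarrow> 'i \<Rightarrow> 'a list set" where
  "deriv_iter r T = wfrec (r - Id) (\<lambda>f i. T \<inter> (\<Inter>j\<in>{j. (j, i) \<in> r - Id}. tree_deriv (f j)))"

(* o(T) \<le> otype r, i.e. T^(otype r) = {} *)
definition rank_le :: "'a list set \<Rightarrow> 'i rel \<Rightarrow> bool" where
  "rank_le T r \<longleftrightarrow> T \<inter> (\<Inter>j\<in>Field r. tree_deriv (deriv_iter r T j)) = {}"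

definition l1_seqs :: "(nat \<Rightarrow> real) set" where
  "l1_seqs = {x. summable (\<lambda>n. \<bar>x n\<bar>)}"

definition l1_norm :: "(nat \<Rightarrow> real) \<Rightarrow> real" where
  "l1_norm x = (\<Sum>n. \<bar>x n\<bar>)"

definition contains_l1 :: "'y::real_normed_vector itself \<Rightarrow> bool" where
  "contains_l1 _ \<longleftrightarrow> (\<exists>(E::(nat \<Rightarrow> real) \<Rightarrow> 'y) c. c > 0 \<and>
      (\<forall>x\<in>l1_seqs. \<forall>y\<in>l1_seqs. E (\<lambda>n. x n + y n) = E x + E y) \<and>
      (\<forall>x\<in>l1_seqs. \<forall>a. E (\<lambda>n. a * x n) = a *\<^sub>R E x) \<and>
      (\<forall>x\<in>l1_seqs. c * l1_norm x \<le> norm (E x) \<and> norm (E x) \<le> l1_norm x / c))"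

(* phi_NC_l1(Y) \<le> otype r, for a well-order r; omega_1 is represented by cardSuc natLeq *)
definition phi_l1_le :: "'y::real_normed_vector itself \<Rightarrow> 'i rel \<Rightarrow> bool" where
  "phi_l1_le Y r \<longleftrightarrow>
     (if contains_l1 Y then (cardSuc natLeq, r) \<in> ordLeq
      else (\<forall>\<delta>\<ge>1. rank_le (l1_tree \<delta> :: 'y list set) r))"

end

theory Submission
  imports Defs
begin

(* Let Q : Y \<rightarrow> X be a bounded linear surjection.  By the open mapping theorem (proved
   below via the Baire category theorem) Q has a bounded, possibly nonlinear right inverse L.
   Applying L coordinatewise maps every l_1 tree T(X,\<delta>) into some T(Y,\<delta>'), preserving strict
   extension of sequences; such tree morphisms cannot increase the rank, since they map each
   iterated derivative into the corresponding one.  If X contains l_1, the same lift turns an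
   infinite l_1 branch of X into one of Y, so Y contains l_1.  The remaining case -- X free of
   l_1 while Y contains l_1, i.e. the comparison ordinal is at least omega_1 -- uses separability
   of X: perturbing vectors into a countable dense set D maps T(X,\<delta>) into the countable tree
   T(X,\<delta>') \<inter> lists D, which has no infinite branch, hence countable rank. *)

section \<open>Iterated derivatives and ranks of trees\<close>

lemma wf_strict_well_order: "Well_order r \<Longrightarrow> wf (r - Id)"
  by (simp add: well_order_on_def)

lemma deriv_iter_unfold:
  assumes "Well_order r"
  shows "deriv_iter r T i = T \<inter> (\<Inter>j\<in>{j. (j, i) \<in> r - Id}. tree_deriv (deriv_iter r T j))"
  unfolding deriv_iter_def by (subst wfrec[OF wf_strict_well_order[OF assms]]) (simp add: cut_def)

lemma deriv_iter_subset: "Well_order r \<Longrightarrow> deriv_iter r T i \<subseteq> T"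
  by (subst deriv_iter_unfold) auto

lemma deriv_iter_below:
  assumes "Well_order r" and "(j, i) \<in> r - Id"
  shows "deriv_iter r T i \<subseteq> tree_deriv (deriv_iter r T j)"
  using assms by (subst deriv_iter_unfold) auto

lemma tree_morphism_deriv_iter:
  assumes wo: "Well_order r"
    and into: "\<And>s. s \<in> T \<Longrightarrow> f s \<in> T'"
    and mono: "\<And>s t. strict_prefix s t \<Longrightarrow> strict_prefix (f s) (f t)"
  shows "f ` deriv_iter r T i \<subseteq> deriv_iter r T' i"
proof (induction i rule: wf_induct_rule[OF wf_strict_well_order[OF wo]])
  case (1 i)
  have "f s \<in> tree_deriv (deriv_iter r T' j)"
    if s: "s \<in> deriv_iter r T i" and j: "(j, i) \<in> r - Id" for s j
  proof -
    obtain t where t: "t \<in> deriv_iter r T j" "strict_prefix s t" and s': "s \<in> deriv_iter r T j"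
      using deriv_iter_below[OF wo j] s unfolding tree_deriv_def by blast
    have "f t \<in> deriv_iter r T' j" "f s \<in> deriv_iter r T' j"
      using 1 j t(1) s' by blast+
    with mono[OF t(2)] show ?thesis unfolding tree_deriv_def by blast
  qed
  moreover have "f s \<in> T'" if "s \<in> deriv_iter r T i" for s
    using that into deriv_iter_subset[OF wo] by blast
  ultimately show ?case unfolding deriv_iter_unfold[OF wo, of T' i] by blast
qed

lemma rank_le_tree_morphism:
  assumes wo: "Well_order r"
    and into: "\<And>s. s \<in> T \<Longrightarrow> f s \<in> T'"
    and mono: "\<And>s t. strict_prefix s t \<Longrightarrow> strict_prefix (f s) (f t)"
    and rank: "rank_le T' r"
  shows "rank_le T r"
  unfolding rank_le_def
proof (rule ccontr)
  assume "T \<inter> (\<Inter>j\<in>Field r. tree_deriv (deriv_iter r T j)) \<noteq> {}"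
  then obtain s where sT: "s \<in> T" and sj: "\<And>j. j \<in> Field r \<Longrightarrow> s \<in> tree_deriv (deriv_iter r T j)"
    by blast
  have "f s \<in> tree_deriv (deriv_iter r T' j)" if j: "j \<in> Field r" for j
  proof -
    obtain t where t: "t \<in> deriv_iter r T j" "strict_prefix s t" and s': "s \<in> deriv_iter r T j"
      using sj[OF j] unfolding tree_deriv_def by blast
    have "f t \<in> deriv_iter r T' j" "f s \<in> deriv_iter r T' j"
      using tree_morphism_deriv_iter[where T=T and T'=T' and f=f and i=j, OF wo into mono] t(1) s' by auto
    with mono[OF t(2)] show ?thesis unfolding tree_deriv_def by blast
  qed
  with into[OF sT] have "f s \<in> T' \<inter> (\<Inter>j\<in>Field r. tree_deriv (deriv_iter r T' j))" by blast
  with rank show False unfolding rank_le_def by blast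
qed

(* A countable tree in which no nonempty subset is contained in its own derivative (i.e. which
   has no infinite branch) has rank at most any well-order with uncountable field: choosing in
   each stage a point outside its derivative gives an injection of Field r into the tree. *)
lemma rank_le_countable_tree:
  assumes wo: "Well_order r" and unc: "\<not> countable (Field r)" and cS: "countable S"
    and no_dense: "\<And>A. A \<noteq> {} \<Longrightarrow> A \<subseteq> S \<Longrightarrow> A \<subseteq> tree_deriv A \<Longrightarrow> False"
  shows "rank_le S r"
  unfolding rank_le_def
proof (rule ccontr)
  let ?st = "deriv_iter r S"
  assume "S \<inter> (\<Inter>j\<in>Field r. tree_deriv (?st j)) \<noteq> {}"
  then have nonempty: "?st j \<noteq> {}" if "j \<in> Field r" for j
    using that unfolding tree_deriv_def by blast
  have "\<exists>p. p \<in> ?st j - tree_deriv (?st j)" if "j \<in> Field r" for j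
    using no_dense[OF nonempty[OF that] deriv_iter_subset[OF wo]] by blast
  then obtain p where p: "\<And>j. j \<in> Field r \<Longrightarrow> p j \<in> ?st j - tree_deriv (?st j)"
    by metis
  have "inj_on p (Field r)"
  proof (rule inj_onI, rule ccontr)
    fix i j assume i: "i \<in> Field r" and j: "j \<in> Field r" and eq: "p i = p j" and "i \<noteq> j"
    then have "(i, j) \<in> r - Id \<or> (j, i) \<in> r - Id"
      using wo unfolding well_order_on_def linear_order_on_def total_on_def by auto
    then show False
    proof
      assume "(i, j) \<in> r - Id"
      with p[OF j] have "p j \<in> tree_deriv (deriv_iter r S i)" using deriv_iter_below[OF wo] by blast
      with p[OF i] eq show False by simp
    next
      assume "(j, i) \<in> r - Id"
      with p[OF i] have "p i \<in> tree_deriv (deriv_iter r S j)" using deriv_iter_below[OF wo] by blast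
      with p[OF j] eq show False by simp
    qed
  qed
  moreover have "p ` Field r \<subseteq> S" using p deriv_iter_subset[OF wo] by blast
  ultimately have "countable (Field r)"
    using cS by (meson countable_image_inj_on countable_subset)
  with unc show False by contradiction
qed

lemma uncountable_field_if_omega1_le:
  assumes "(cardSuc natLeq, r) \<in> ordLeq" shows "\<not> countable (Field r)"
proof
  assume "countable (Field r)"
  then have "(card_of (Field r), card_of (UNIV::nat set)) \<in> ordLeq"
    unfolding countable_def card_of_ordLeq[symmetric] by auto
  then have le_nat: "(card_of (Field r), natLeq) \<in> ordLeq"
    using card_of_nat ordLeq_ordIso_trans by blast
  have "(card_of (Field (cardSuc natLeq)), card_of (Field r)) \<in> ordLeq"
    using card_of_mono2 assms by blast
  moreover have "(card_of (Field (cardSuc natLeq)), cardSuc natLeq) \<in> ordIso"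
    using card_of_Field_ordIso cardSuc_Card_order natLeq_Card_order by blast
  moreover have "(natLeq, cardSuc natLeq) \<in> ordLess"
    using cardSuc_greater natLeq_Card_order by blast
  ultimately have "(natLeq, card_of (Field r)) \<in> ordLess"
    by (meson ordIso_symmetric ordLess_ordIso_trans ordLess_ordLeq_trans)
  with le_nat show False using not_ordLess_ordLeq by blast
qed

lemma infinite_branch:
  assumes ne: "A \<noteq> {}" and AS: "A \<subseteq> S" and dense: "A \<subseteq> tree_deriv A"
    and take_closed: "\<And>s n. s \<in> S \<Longrightarrow> take n s \<in> S"
  shows "\<exists>x. \<forall>n. map x [0..<n] \<in> S"
proof -
  obtain s0 where s0: "s0 \<in> A" using ne by auto
  have "\<exists>t. t \<in> A \<and> strict_prefix s t" if "s \<in> A" for s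
    using dense that unfolding tree_deriv_def by auto
  then obtain nxt where nxt: "\<And>s. s \<in> A \<Longrightarrow> nxt s \<in> A \<and> strict_prefix s (nxt s)"
    by metis
  define ch where "ch k = (nxt ^^ k) s0" for k
  have chA: "ch k \<in> A" for k by (induction k) (auto simp: ch_def s0 nxt)
  have step: "strict_prefix (ch k) (ch (Suc k))" for k
    using nxt[OF chA[of k]] by (simp add: ch_def)
  have len: "k \<le> length (ch k)" for k
  proof (induction k)
    case (Suc k)
    then show ?case using prefix_length_less[OF step[of k]] by simp
  qed simp
  have pre: "prefix (ch k) (ch (k + d))" for k d
  proof (induction d)
    case (Suc d)
    then show ?case using prefix_order.trans step[of "k + d"] by (auto simp: strict_prefix_def)
  qed simp
  define x where "x i = ch (Suc i) ! i" for i
  have "map x [0..<n] = take n (ch n)" for n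
  proof (rule nth_equalityI)
    show "length (map x [0..<n]) = length (take n (ch n))" using len[of n] by simp
    fix i assume "i < length (map x [0..<n])"
    then obtain d where i: "i < n" and d: "n = Suc i + d" by (auto dest: less_imp_Suc_add)
    then obtain zs where "ch n = ch (Suc i) @ zs" using pre[of "Suc i" d] by (auto simp: prefix_def)
    then show "map x [0..<n] ! i = take n (ch n) ! i"
      using i len[of "Suc i"] by (simp add: x_def nth_append)
  qed
  with take_closed chA AS show ?thesis by (metis subsetD)
qed

section \<open>The l_1 trees\<close>

lemma l1_tree_memI:
  assumes "\<And>a. (1/\<delta>) * (\<Sum>n<length ys. \<bar>a n\<bar>) \<le> norm (\<Sum>n<length ys. a n *\<^sub>R ys ! n)"
    and "\<And>a. norm (\<Sum>n<length ys. a n *\<^sub>R ys ! n) \<le> \<delta> * (\<Sum>n<length ys. \<bar>a n\<bar>)"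
  shows "ys \<in> l1_tree \<delta>"
  using assms unfolding l1_tree_def by blast

lemma l1_tree_memD:
  assumes "ys \<in> l1_tree \<delta>"
  shows "(1/\<delta>) * (\<Sum>n<length ys. \<bar>a n\<bar>) \<le> norm (\<Sum>n<length ys. a n *\<^sub>R ys ! n)"
    and "norm (\<Sum>n<length ys. a n *\<^sub>R ys ! n) \<le> \<delta> * (\<Sum>n<length ys. \<bar>a n\<bar>)"
  using assms unfolding l1_tree_def by blast+

lemma l1_tree_mono:
  assumes "0 < \<delta>" "\<delta> \<le> \<delta>'" shows "l1_tree \<delta> \<subseteq> l1_tree \<delta>'"
proof
  fix ys :: "'a list" assume ys: "ys \<in> l1_tree \<delta>"
  show "ys \<in> l1_tree \<delta>'"
  proof (rule l1_tree_memI)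
    fix a :: "nat \<Rightarrow> real"
    have A: "0 \<le> (\<Sum>n<length ys. \<bar>a n\<bar>)" by (simp add: sum_nonneg)
    have "(1/\<delta>') * (\<Sum>n<length ys. \<bar>a n\<bar>) \<le> (1/\<delta>) * (\<Sum>n<length ys. \<bar>a n\<bar>)"
      using assms A by (intro mult_right_mono divide_left_mono) auto
    with l1_tree_memD(1)[OF ys, of a]
    show "(1/\<delta>') * (\<Sum>n<length ys. \<bar>a n\<bar>) \<le> norm (\<Sum>n<length ys. a n *\<^sub>R ys ! n)"
      by linarith
    have "\<delta> * (\<Sum>n<length ys. \<bar>a n\<bar>) \<le> \<delta>' * (\<Sum>n<length ys. \<bar>a n\<bar>)"
      using assms A by (intro mult_right_mono) auto
    with l1_tree_memD(2)[OF ys, of a]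
    show "norm (\<Sum>n<length ys. a n *\<^sub>R ys ! n) \<le> \<delta>' * (\<Sum>n<length ys. \<bar>a n\<bar>)"
      by linarith
  qed
qed

(* l_1 trees are closed under initial segments: pad the coefficients with zeros. *)
lemma l1_tree_take:
  assumes "ys \<in> l1_tree \<delta>" shows "take n ys \<in> l1_tree \<delta>"
proof -
  let ?m = "length (take n ys)"
  have key: "(\<Sum>i<length ys. f (if i < ?m then a i else 0) i) = (\<Sum>i<?m. f (a i) i)"
    if "\<And>i. f 0 i = 0" for f :: "real \<Rightarrow> nat \<Rightarrow> 'b::comm_monoid_add" and a
  proof -
    have "(\<Sum>i<length ys. f (if i < ?m then a i else 0) i) = (\<Sum>i<?m. f (if i < ?m then a i else 0) i)"
      by (rule sum.mono_neutral_right) (auto simp: that)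
    then show ?thesis by simp
  qed
  show ?thesis
  proof (rule l1_tree_memI)
    fix a :: "nat \<Rightarrow> real"
    let ?a = "\<lambda>i. if i < ?m then a i else 0"
    have "(\<Sum>i<length ys. \<bar>?a i\<bar>) = (\<Sum>i<?m. \<bar>a i\<bar>)"
      using key[of "\<lambda>c i. \<bar>c\<bar>"] by simp
    moreover have "(\<Sum>i<length ys. ?a i *\<^sub>R ys ! i) = (\<Sum>i<?m. a i *\<^sub>R take n ys ! i)"
      using key[of "\<lambda>c i. c *\<^sub>R ys ! i"] by simp
    ultimately show "(1/\<delta>) * (\<Sum>i<?m. \<bar>a i\<bar>) \<le> norm (\<Sum>i<?m. a i *\<^sub>R take n ys ! i)"
      and "norm (\<Sum>i<?m. a i *\<^sub>R take n ys ! i) \<le> \<delta> * (\<Sum>i<?m. \<bar>a i\<bar>)"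
      using l1_tree_memD[OF assms, of ?a] by simp_all
  qed
qed

(* Each vector in an l_1 tree has norm at most \<delta> (test with a unit coefficient vector). *)
lemma l1_tree_nth_norm:
  assumes "s \<in> l1_tree \<delta>" "n < length s"
  shows "norm (s ! n) \<le> \<delta>"
proof -
  define a where "a k = (if k = n then 1 else 0::real)" for k
  have "(\<Sum>k<length s. a k *\<^sub>R s ! k) = (\<Sum>k<length s. if k = n then s ! k else 0)"
    by (intro sum.cong) (auto simp: a_def)
  moreover have "(\<Sum>k<length s. \<bar>a k\<bar>) = (\<Sum>k<length s. if k = n then 1 else 0)"
    by (intro sum.cong) (auto simp: a_def)
  ultimately have "(\<Sum>k<length s. a k *\<^sub>R s ! k) = s ! n" "(\<Sum>k<length s. \<bar>a k\<bar>) = 1"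
    using assms(2) by simp_all
  with l1_tree_memD(2)[OF assms(1), of a] show ?thesis by simp
qed

lemma map_upt_l1_tree:
  "map x [0..<n] \<in> l1_tree \<delta> \<longleftrightarrow> (\<forall>a::nat\<Rightarrow>real.
      (1/\<delta>) * (\<Sum>i<n. \<bar>a i\<bar>) \<le> norm (\<Sum>i<n. a i *\<^sub>R x i)
    \<and> norm (\<Sum>i<n. a i *\<^sub>R x i) \<le> \<delta> * (\<Sum>i<n. \<bar>a i\<bar>))"
proof -
  have "(\<Sum>i<n. a i *\<^sub>R map x [0..<n] ! i) = (\<Sum>i<n. a i *\<^sub>R x i)" for a :: "nat \<Rightarrow> real"
    by (rule sum.cong) auto
  then show ?thesis unfolding l1_tree_def by simp
qed

(* Along an infinite branch the series \<Sum> a_i x_i converges for every a \<in> l_1, and the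
   finite \<delta>-equivalences pass to the limit. *)
lemma l1_branch_series:
  fixes x :: "nat \<Rightarrow> 'x::banach"
  assumes branch: "\<And>n. map x [0..<n] \<in> l1_tree \<delta>" and a: "a \<in> l1_seqs"
  shows "summable (\<lambda>i. a i *\<^sub>R x i)"
    and "(1/\<delta>) * l1_norm a \<le> norm (\<Sum>i. a i *\<^sub>R x i)"
    and "norm (\<Sum>i. a i *\<^sub>R x i) \<le> \<delta> * l1_norm a"
proof -
  have bounds: "(1/\<delta>) * (\<Sum>i<n. \<bar>a i\<bar>) \<le> norm (\<Sum>i<n. a i *\<^sub>R x i)"
    "norm (\<Sum>i<n. a i *\<^sub>R x i) \<le> \<delta> * (\<Sum>i<n. \<bar>a i\<bar>)" for n
    using branch[of n] unfolding map_upt_l1_tree by blast+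
  have "norm (x i) \<le> \<delta>" for i
    using l1_tree_nth_norm[OF branch[of "Suc i"], of i] by (simp add: nth_append)
  then have "norm (a i *\<^sub>R x i) \<le> \<delta> * \<bar>a i\<bar>" for i
    using mult_left_mono[of "norm (x i)" \<delta> "\<bar>a i\<bar>"] by (simp add: mult.commute)
  moreover have "summable (\<lambda>i. \<delta> * \<bar>a i\<bar>)"
    using a unfolding l1_seqs_def by (simp add: summable_mult)
  ultimately show sum: "summable (\<lambda>i. a i *\<^sub>R x i)"
    by (rule summable_comparison_test[OF exI, OF allI, OF impI])
  have lim_vec: "(\<lambda>n. norm (\<Sum>i<n. a i *\<^sub>R x i)) \<longlonglongrightarrow> norm (\<Sum>i. a i *\<^sub>R x i)"
    using summable_LIMSEQ[OF sum] by (rule tendsto_norm)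
  have lim_abs: "(\<lambda>n. \<Sum>i<n. \<bar>a i\<bar>) \<longlonglongrightarrow> l1_norm a"
    using a summable_LIMSEQ unfolding l1_seqs_def l1_norm_def by blast
  show "(1/\<delta>) * l1_norm a \<le> norm (\<Sum>i. a i *\<^sub>R x i)"
    using bounds(1) by (intro LIMSEQ_le[OF tendsto_mult_left[OF lim_abs] lim_vec]) auto
  show "norm (\<Sum>i. a i *\<^sub>R x i) \<le> \<delta> * l1_norm a"
    using bounds(2) by (intro LIMSEQ_le[OF lim_vec tendsto_mult_left[OF lim_abs]]) auto
qed

lemma contains_l1_if_branch:
  fixes x :: "nat \<Rightarrow> 'x::banach"
  assumes "\<delta> > 0" and branch: "\<And>n. map x [0..<n] \<in> l1_tree \<delta>"
  shows "contains_l1 TYPE('x)"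
proof -
  define E where "E a = (\<Sum>i. a i *\<^sub>R x i)" for a :: "nat \<Rightarrow> real"
  show ?thesis
    unfolding contains_l1_def
  proof (intro exI[of _ E] exI[of _ "1/\<delta>"] conjI ballI allI)
    show "1/\<delta> > 0" using assms(1) by simp
    fix a b assume a: "a \<in> l1_seqs" and b: "b \<in> l1_seqs"
    show "E (\<lambda>n. a n + b n) = E a + E b"
      using suminf_add[OF l1_branch_series(1)[OF branch a] l1_branch_series(1)[OF branch b]]
      by (simp add: E_def scaleR_add_left)
  next
    fix a c assume a: "a \<in> l1_seqs"
    show "E (\<lambda>n. c * a n) = c *\<^sub>R E a"
      using suminf_scaleR_right[OF l1_branch_series(1)[OF branch a], of c] by (simp add: E_def)
  next
    fix a assume a: "a \<in> l1_seqs"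
    show "1/\<delta> * l1_norm a \<le> norm (E a)"
      unfolding E_def by (rule l1_branch_series(2)[OF branch a])
    show "norm (E a) \<le> l1_norm a / (1/\<delta>)"
      using l1_branch_series(3)[OF branch a] by (simp add: E_def mult.commute)
  qed
qed

lemma finite_support_l1: "finite {m. u m \<noteq> 0} \<Longrightarrow> u \<in> l1_seqs"
  unfolding l1_seqs_def mem_Collect_eq by (rule summable_finite[of "{m. u m \<noteq> 0}"]) auto

lemma l1_embedding_finite_sum:
  fixes E :: "(nat \<Rightarrow> real) \<Rightarrow> 'x::real_vector"
  assumes add: "\<And>u v. u \<in> l1_seqs \<Longrightarrow> v \<in> l1_seqs \<Longrightarrow> E (\<lambda>n. u n + v n) = E u + E v"
    and hom: "\<And>u c. u \<in> l1_seqs \<Longrightarrow> E (\<lambda>n. c * u n) = c *\<^sub>R E u"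
  shows "E (\<lambda>m. if m < N then a m else 0) = (\<Sum>k<N. a k *\<^sub>R E (\<lambda>m. if m = k then 1 else 0))"
proof (induction N)
  case 0
  have "(\<lambda>m::nat. 0::real) = (\<lambda>m. 0 * (if m = 0 then 1 else 0))" by simp
  then show ?case using hom[OF finite_support_l1, of "\<lambda>m. if m = 0 then 1 else 0" 0] by simp
next
  case (Suc N)
  let ?e = "\<lambda>m::nat. if m = N then 1 else (0::real)"
  have "(\<lambda>m. if m < Suc N then a m else 0) = (\<lambda>m. (if m < N then a m else 0) + a N * ?e m)"
    by (rule ext) (auto simp: less_Suc_eq)
  moreover have "(\<lambda>m. if m < N then a m else 0) \<in> l1_seqs"
    by (auto intro!: finite_support_l1 finite_subset[of _ "{..<N}"] split: if_splits)
  moreover have "(\<lambda>m. a N * ?e m) \<in> l1_seqs" "?e \<in> l1_seqs"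
    by (auto intro!: finite_support_l1 finite_subset[of _ "{N}"] split: if_splits)
  ultimately show ?case using Suc add hom by simp
qed

(* Conversely, an isomorphic copy of l_1 yields an infinite branch: the images of the unit vectors. *)
lemma branch_if_contains_l1:
  assumes "contains_l1 TYPE('x::real_normed_vector)"
  shows "\<exists>(x::nat \<Rightarrow> 'x) \<delta>. \<delta> > 0 \<and> (\<forall>n. map x [0..<n] \<in> l1_tree \<delta>)"
proof -
  obtain E :: "(nat \<Rightarrow> real) \<Rightarrow> 'x" and c where c: "c > 0"
    and add: "\<And>u v. u \<in> l1_seqs \<Longrightarrow> v \<in> l1_seqs \<Longrightarrow> E (\<lambda>n. u n + v n) = E u + E v"
    and hom: "\<And>u a. u \<in> l1_seqs \<Longrightarrow> E (\<lambda>n. a * u n) = a *\<^sub>R E u"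
    and bd: "\<And>u. u \<in> l1_seqs \<Longrightarrow> c * l1_norm u \<le> norm (E u) \<and> norm (E u) \<le> l1_norm u / c"
    using assms unfolding contains_l1_def by blast
  define x where "x k = E (\<lambda>m. if m = k then 1 else 0)" for k
  have "map x [0..<n] \<in> l1_tree (1/c)" for n
    unfolding map_upt_l1_tree
  proof
    fix a :: "nat \<Rightarrow> real"
    let ?u = "\<lambda>m. if m < n then a m else 0"
    have u: "?u \<in> l1_seqs"
      by (auto intro!: finite_support_l1 finite_subset[of _ "{..<n}"] split: if_splits)
    have "l1_norm ?u = (\<Sum>k<n. \<bar>a k\<bar>)"
      unfolding l1_norm_def by (subst suminf_finite[of "{..<n}"]) auto
    moreover have "E ?u = (\<Sum>i<n. a i *\<^sub>R x i)"
      unfolding x_def by (rule l1_embedding_finite_sum[where E=E, OF add hom])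
    ultimately show "1 / (1/c) * (\<Sum>i<n. \<bar>a i\<bar>) \<le> norm (\<Sum>i<n. a i *\<^sub>R x i) \<and>
        norm (\<Sum>i<n. a i *\<^sub>R x i) \<le> 1/c * (\<Sum>i<n. \<bar>a i\<bar>)"
      using bd[OF u] by simp
  qed
  then show ?thesis using c by (intro exI[of _ x] exI[of _ "1/c"]) simp
qed

(* Perturbation: replacing each vector of a sequence in T(X,\<delta>) by a vector at distance at most
   1/(2\<delta>) changes \<Sum> a_i x_i by at most (1/(2\<delta>)) \<Sum> |a_i|, so the new sequence lies in T(X,2\<delta>). *)
lemma l1_tree_perturb:
  fixes d :: "'x::real_normed_vector \<Rightarrow> 'x"
  assumes \<delta>: "\<delta> \<ge> 1" and close: "\<And>x. norm (x - d x) \<le> 1 / (2 * \<delta>)" and s: "s \<in> l1_tree \<delta>"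
  shows "map d s \<in> l1_tree (2 * \<delta>)"
proof (rule l1_tree_memI)
  fix a :: "nat \<Rightarrow> real"
  let ?S = "\<Sum>i<length s. a i *\<^sub>R map d s ! i"
  let ?T = "\<Sum>i<length s. a i *\<^sub>R s ! i"
  let ?A = "\<Sum>i<length s. \<bar>a i\<bar>"
  have "norm (?T - ?S) = norm (\<Sum>i<length s. a i *\<^sub>R (s ! i - d (s ! i)))"
    by (simp add: sum_subtractf[symmetric] scaleR_diff_right)
  also have "\<dots> \<le> (\<Sum>i<length s. \<bar>a i\<bar> * (1 / (2 * \<delta>)))"
    by (rule order.trans[OF norm_sum sum_mono]) (use mult_left_mono[OF close abs_ge_zero] in simp)
  also have "\<dots> = ?A / (2 * \<delta>)" by (simp add: sum_divide_distrib)
  finally have diff: "norm (?T - ?S) \<le> ?A / (2 * \<delta>)" .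
  have A: "?A \<ge> 0" by (simp add: sum_nonneg)
  have T: "?A / \<delta> \<le> norm ?T" "norm ?T \<le> \<delta> * ?A"
    using l1_tree_memD[OF s, of a] by simp_all
  have tri: "norm ?T \<le> norm ?S + norm (?T - ?S)" "norm ?S \<le> norm ?T + norm (?T - ?S)"
    using norm_triangle_sub[of ?T ?S] norm_triangle_sub[of ?S ?T] by (simp_all add: norm_minus_commute)
  have "?A / \<delta> - ?A / (2 * \<delta>) = ?A / (2 * \<delta>)" using \<delta> by (simp add: field_simps)
  with T(1) tri(1) diff
  show "1 / (2 * \<delta>) * (\<Sum>i<length (map d s). \<bar>a i\<bar>) \<le> norm (\<Sum>i<length (map d s). a i *\<^sub>R map d s ! i)"
    by simp
  have "?A / (2 * \<delta>) \<le> ?A / 1"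
    using \<delta> A by (intro divide_left_mono) auto
  also have "\<dots> \<le> \<delta> * ?A"
    using mult_right_mono[OF \<delta> A] by simp
  finally have "?A / (2 * \<delta>) \<le> \<delta> * ?A" .
  with T(2) tri(2) diff
  show "norm (\<Sum>i<length (map d s). a i *\<^sub>R map d s ! i) \<le> 2 * \<delta> * (\<Sum>i<length (map d s). \<bar>a i\<bar>)"
    by simp
qed

(* Lifting: if Q is linear with \<parallel>Q y\<parallel> \<le> B\<parallel>y\<parallel> and L is a right inverse of Q with \<parallel>L x\<parallel> \<le> K\<parallel>x\<parallel>, then L
   maps T(X,\<delta>) into T(Y, \<delta> max B K): the lower estimate is pushed through Q, the upper one
   follows from the triangle inequality. *)
lemma l1_tree_lift:
  fixes Q :: "'y::real_normed_vector \<Rightarrow> 'x::real_normed_vector" and L :: "'x \<Rightarrow> 'y"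
  assumes "linear Q" and B: "B > 0" and Q_bound: "\<And>y. norm (Q y) \<le> B * norm y"
    and right_inv: "\<And>x. Q (L x) = x" and K: "K > 0" and L_bound: "\<And>x. norm (L x) \<le> K * norm x"
    and \<delta>: "\<delta> > 0" and s: "s \<in> l1_tree \<delta>"
  shows "map L s \<in> l1_tree (\<delta> * max B K)"
proof (rule l1_tree_memI)
  interpret Q: linear Q by fact
  fix a :: "nat \<Rightarrow> real"
  let ?S = "\<Sum>i<length s. a i *\<^sub>R map L s ! i"
  let ?A = "\<Sum>i<length s. \<bar>a i\<bar>"
  have A: "?A \<ge> 0" by (simp add: sum_nonneg)
  have "Q ?S = (\<Sum>i<length s. a i *\<^sub>R s ! i)"
    by (simp add: Q.sum Q.scale right_inv)
  then have "?A / \<delta> \<le> B * norm ?S"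
    using l1_tree_memD(1)[OF s, of a] Q_bound[of ?S] by simp
  then have "?A / (\<delta> * B) \<le> norm ?S" using B \<delta> by (simp add: field_simps)
  moreover have "?A / (\<delta> * max B K) \<le> ?A / (\<delta> * B)"
    using A B \<delta> by (intro divide_left_mono) auto
  ultimately show "1 / (\<delta> * max B K) * (\<Sum>i<length (map L s). \<bar>a i\<bar>)
      \<le> norm (\<Sum>i<length (map L s). a i *\<^sub>R map L s ! i)"
    by simp
  have "norm ?S \<le> (\<Sum>i<length s. \<bar>a i\<bar> * (K * \<delta>))"
  proof (rule order.trans[OF norm_sum sum_mono])
    fix i assume "i \<in> {..<length s}"
    then have "K * norm (s ! i) \<le> K * \<delta>"
      using l1_tree_nth_norm[OF s] K by (simp add: mult_left_mono)
    then have "norm (L (s ! i)) \<le> K * \<delta>"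
      using L_bound[of "s ! i"] by linarith
    then show "norm (a i *\<^sub>R map L s ! i) \<le> \<bar>a i\<bar> * (K * \<delta>)"
      using \<open>i \<in> {..<length s}\<close> by (simp add: mult_left_mono)
  qed
  also have "\<dots> \<le> (\<delta> * max B K) * ?A"
    using A \<delta> by (simp add: sum_distrib_right[symmetric] mult.commute mult_right_mono)
  finally show "norm (\<Sum>i<length (map L s). a i *\<^sub>R map L s ! i) \<le> \<delta> * max B K * (\<Sum>i<length (map L s). \<bar>a i\<bar>)"
    by simp
qed

section \<open>A bounded right inverse of a surjection between Banach spaces\<close>

(* Baire category: X is the countable union of the closed sets cl Q(B(0,n)), so one of them
   contains a ball. *)
lemma surj_closure_image_ball_interior:
  fixes Q :: "'y::real_normed_vector \<Rightarrow> 'x::banach"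
  assumes "surj Q"
  shows "\<exists>n a \<rho>. \<rho> > 0 \<and> ball a \<rho> \<subseteq> closure (Q ` ball 0 (real n))"
proof (rule ccontr)
  assume none: "\<not> ?thesis"
  let ?G = "range (\<lambda>n::nat. closure (Q ` ball 0 (real n)))"
  have "euclidean interior_of \<Union>?G = {}"
  proof (rule Baire_category_alt)
    show "completely_metrizable_space (euclidean :: 'x topology) \<or>
        locally_compact_space (euclidean :: 'x topology) \<and> regular_space (euclidean :: 'x topology)"
      using completely_metrizable_space_euclidean by blast
    fix T assume "T \<in> ?G"
    with none show "closedin euclidean T \<and> euclidean interior_of T = {}"
      by (auto simp: mem_interior)
  qed simp
  moreover have "\<Union>?G = UNIV"
  proof (intro set_eqI iffI UNIV_I)
    fix x
    obtain y where "Q y = x" using assms by (metis surjD)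
    moreover obtain n :: nat where "norm y < real n" using reals_Archimedean2 by blast
    ultimately have "x \<in> closure (Q ` ball 0 (real n))" by (auto intro: closure_subset[THEN subsetD])
    then show "x \<in> \<Union>?G" by blast
  qed
  ultimately show False by simp
qed

(* If cl Q(B(0,r)) contains the ball B(a,\<rho>), then by linearity every z with \<parallel>z\<parallel> < \<rho> is
   approximated arbitrarily well by images of vectors of norm < 2r (take differences of
   approximations of a + z and of a). *)
lemma closure_image_ball_approx:
  fixes Q :: "'y::real_normed_vector \<Rightarrow> 'x::real_normed_vector"
  assumes "linear Q" and ball: "ball a \<rho> \<subseteq> closure (Q ` ball 0 r)"
    and z: "norm z < \<rho>" and e: "e > 0"
  shows "\<exists>y. norm y < 2 * r \<and> norm (z - Q y) < e"
proof -
  interpret Q: linear Q by fact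
  have "a + z \<in> closure (Q ` ball 0 r)" using ball z by (auto simp: dist_norm subset_iff)
  moreover have "a \<in> closure (Q ` ball 0 r)"
    using ball z norm_ge_zero[of z] by (meson centre_in_ball le_less_trans subsetD)
  ultimately have "\<forall>\<epsilon>>0. \<exists>w\<in>ball 0 r. dist (Q w) (a + z) < \<epsilon>"
    and "\<forall>\<epsilon>>0. \<exists>w\<in>ball 0 r. dist (Q w) a < \<epsilon>"
    unfolding closure_approachable by simp_all
  then have "\<exists>w\<in>ball 0 r. dist (Q w) (a + z) < e/2" "\<exists>w\<in>ball 0 r. dist (Q w) a < e/2"
    using half_gt_zero[OF e] by blast+
  then obtain u v where u: "norm u < r" "dist (Q u) (a + z) < e/2"
    and v: "norm v < r" "dist (Q v) a < e/2"
    by auto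
  have "z - Q (u - v) = (a + z - Q u) + (Q v - a)" by (simp add: Q.diff algebra_simps)
  then have "norm (z - Q (u - v)) \<le> norm (a + z - Q u) + norm (Q v - a)"
    by (metis norm_triangle_ineq)
  also have "\<dots> < e" using u(2) v(2) by (simp add: dist_norm norm_minus_commute)
  finally show ?thesis
    using u(1) v(1) norm_triangle_ineq4[of u v] by (intro exI[of _ "u - v"]) auto
qed

(* The approximate lifting property: every x has a preimage up to an error \<parallel>x\<parallel>/2 of norm at
   most K\<parallel>x\<parallel>; by homogeneity it suffices to treat \<parallel>x\<parallel> = \<rho>/2. *)
lemma approximate_preimage:
  fixes Q :: "'y::real_normed_vector \<Rightarrow> 'x::banach"
  assumes lin: "linear Q" and "surj Q"
  shows "\<exists>K>0. \<forall>x. \<exists>y. norm y \<le> K * norm x \<and> norm (x - Q y) \<le> norm x / 2"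
proof -
  interpret Q: linear Q by fact
  obtain n a \<rho> where \<rho>: "\<rho> > 0" and ball: "ball a \<rho> \<subseteq> closure (Q ` ball 0 (real n))"
    using surj_closure_image_ball_interior[OF assms(2)] by blast
  define K where "K = 4 * real n / \<rho> + 1"
  have "\<exists>y. norm y \<le> K * norm x \<and> norm (x - Q y) \<le> norm x / 2" for x
  proof (cases "x = 0")
    case False
    define c where "c = \<rho> / (2 * norm x)"
    have c: "c > 0" and "norm (c *\<^sub>R x) < \<rho>" using \<rho> False by (auto simp: c_def)
    then obtain y where y: "norm y < 2 * real n" "norm (c *\<^sub>R x - Q y) < \<rho> / 4"
      using closure_image_ball_approx[OF lin ball, of "c *\<^sub>R x" "\<rho>/4"] \<rho> by auto
    have "x - Q (y /\<^sub>R c) = (c *\<^sub>R x - Q y) /\<^sub>R c"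
      using c by (simp add: Q.scale algebra_simps)
    then have "norm (x - Q (y /\<^sub>R c)) = norm (c *\<^sub>R x - Q y) / c"
      using c by (simp add: divide_inverse_commute)
    also have "\<dots> \<le> (\<rho> / 4) / c" using y(2) c by (intro divide_right_mono) auto
    also have "\<dots> = norm x / 2" using \<rho> False by (simp add: c_def field_simps)
    finally have err: "norm (x - Q (y /\<^sub>R c)) \<le> norm x / 2" .
    have "norm (y /\<^sub>R c) = norm y / c" using c by (simp add: divide_inverse_commute)
    also have "\<dots> \<le> 2 * real n / c" using y(1) c by (intro divide_right_mono) auto
    also have "\<dots> = 4 * real n / \<rho> * norm x" using \<rho> False by (simp add: c_def field_simps)
    also have "\<dots> \<le> K * norm x" by (simp add: K_def distrib_right)
    finally show ?thesis using err by blast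
  qed (auto intro: exI[of _ 0])
  moreover have "K > 0" using \<rho> by (simp add: K_def add_nonneg_pos)
  ultimately show ?thesis by blast
qed

(* Iterating the approximate lift on the residuals x, x - Q(g x), ... (which halve in norm) and
   summing the geometric series of corrections gives an exact preimage of norm \<le> 2K\<parallel>x\<parallel>. *)
lemma iterated_correction:
  fixes Q :: "'y::banach \<Rightarrow> 'x::real_normed_vector"
  assumes "bounded_linear Q" and K: "K \<ge> 0"
    and g_bound: "\<And>x. norm (g x) \<le> K * norm x"
    and g_approx: "\<And>x. norm (x - Q (g x)) \<le> norm x / 2"
  shows "\<exists>y. Q y = x \<and> norm y \<le> 2 * K * norm x"
proof -
  interpret Q: bounded_linear Q by fact
  define res where "res k = ((\<lambda>z. z - Q (g z)) ^^ k) x" for k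
  have res_Suc: "res (Suc k) = res k - Q (g (res k))" for k by (simp add: res_def)
  have res_norm: "norm (res k) \<le> norm x * (1/2)^k" for k
  proof (induction k)
    case (Suc k)
    have "norm (res (Suc k)) \<le> norm (res k) / 2" unfolding res_Suc by (rule g_approx)
    with Suc show ?case by simp
  qed (simp add: res_def)
  have corr_norm: "norm (g (res k)) \<le> K * norm x * (1/2)^k" for k
    using order.trans[OF g_bound mult_left_mono[OF res_norm K]] by (simp add: mult.assoc)
  have geom: "summable (\<lambda>k. K * norm x * (1/2::real)^k)"
    by (intro summable_mult summable_geometric) simp
  have norm_summable: "summable (\<lambda>k. norm (g (res k)))"
    by (rule summable_comparison_test[OF _ geom]) (use corr_norm in auto)
  define y where "y = (\<Sum>k. g (res k))"
  have partial: "Q (\<Sum>k<N. g (res k)) = x - res N" for N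
    by (induction N) (simp_all add: res_def Q.add)
  have "(\<lambda>N. Q (\<Sum>k<N. g (res k))) \<longlonglongrightarrow> Q y"
    unfolding y_def by (intro Q.tendsto summable_LIMSEQ summable_norm_cancel[OF norm_summable])
  moreover have "res \<longlonglongrightarrow> 0"
  proof (rule tendsto_norm_zero_cancel, rule Lim_null_comparison)
    show "\<forall>\<^sub>F k in sequentially. norm (norm (res k)) \<le> norm x * (1/2::real)^k"
      by (simp add: res_norm)
    show "(\<lambda>k. norm x * (1/2::real)^k) \<longlonglongrightarrow> 0"
      by (intro tendsto_mult_right_zero LIMSEQ_power_zero) simp
  qed
  then have "(\<lambda>N. x - res N) \<longlonglongrightarrow> x" using tendsto_diff[OF tendsto_const] by fastforce
  ultimately have "Q y = x" unfolding partial by (rule LIMSEQ_unique)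
  moreover have "norm y \<le> 2 * K * norm x"
  proof -
    have "norm y \<le> (\<Sum>k. norm (g (res k)))" unfolding y_def by (rule summable_norm[OF norm_summable])
    also have "\<dots> \<le> (\<Sum>k. K * norm x * (1/2::real)^k)"
      by (rule suminf_le[OF _ norm_summable geom]) (use corr_norm in auto)
    also have "\<dots> = 2 * K * norm x"
      by (simp add: suminf_mult suminf_geometric)
    finally show ?thesis .
  qed
  ultimately show ?thesis by blast
qed

lemma bounded_right_inverse:
  fixes Q :: "'y::banach \<Rightarrow> 'x::banach"
  assumes "bounded_linear Q" and "surj Q"
  obtains L K where "K > 0" "\<And>x. Q (L x) = x" "\<And>x. norm (L x) \<le> K * norm x"
proof -
  obtain K where K: "K > 0"
    and "\<forall>x. \<exists>y. norm y \<le> K * norm x \<and> norm (x - Q y) \<le> norm x / 2"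
    using approximate_preimage[OF bounded_linear.linear[OF assms(1)] assms(2)] by blast
  then obtain g where "\<And>x. norm (g x) \<le> K * norm x" "\<And>x. norm (x - Q (g x)) \<le> norm x / 2"
    by metis
  then have "\<forall>x. \<exists>y. Q y = x \<and> norm y \<le> 2 * K * norm x"
    using iterated_correction[OF assms(1)] K by (metis less_imp_le)
  then obtain L where "\<And>x. Q (L x) = x" "\<And>x. norm (L x) \<le> 2 * K * norm x" by metis
  with K show ?thesis by (intro that[of "2 * K"]) auto
qed

section \<open>Comparing the l_1 trees of a space and of its quotient\<close>

lemma strict_prefix_map:
  assumes "strict_prefix s t" shows "strict_prefix (map f s) (map f t)"
proof -
  have "prefix s t" "length s < length t" using assms prefix_length_less by (auto simp: strict_prefix_def)
  then show ?thesis using map_mono_prefix[of s t f]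
    by (auto simp: strict_prefix_def dest: arg_cong[of _ _ length])
qed

lemma quotient_lifts_l1_trees:
  fixes Q :: "'y::banach \<Rightarrow> 'x::banach"
  assumes "bounded_linear Q" and "surj Q"
  obtains L :: "'x \<Rightarrow> 'y" and c where "c > 0"
    and "\<And>\<delta> s. \<delta> > 0 \<Longrightarrow> s \<in> l1_tree \<delta> \<Longrightarrow> map L s \<in> l1_tree (\<delta> * c)"
proof -
  obtain K L where "K > 0" "\<And>x. Q (L x) = x" "\<And>x. norm (L x) \<le> K * norm x"
    by (rule bounded_right_inverse[OF assms]) blast
  moreover obtain B where "B > 0" "\<And>y. norm (Q y) \<le> norm y * B"
    using bounded_linear.pos_bounded[OF assms(1)] by blast
  ultimately show ?thesis
    using l1_tree_lift[OF bounded_linear.linear[OF assms(1)]] that[of "max B K" L]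
    by (simp add: mult.commute)
qed

lemma contains_l1_quotient:
  fixes Q :: "'y::banach \<Rightarrow> 'x::banach"
  assumes "bounded_linear Q" and "surj Q" and "contains_l1 TYPE('x)"
  shows "contains_l1 TYPE('y)"
proof -
  obtain c and L :: "'x \<Rightarrow> 'y" where c: "c > 0"
    and lift: "\<And>\<delta> s. \<delta> > 0 \<Longrightarrow> s \<in> l1_tree \<delta> \<Longrightarrow> map L s \<in> l1_tree (\<delta> * c)"
    by (rule quotient_lifts_l1_trees[OF assms(1,2)]) blast
  obtain x :: "nat \<Rightarrow> 'x" and \<delta> where \<delta>: "\<delta> > 0" and branch: "\<And>n. map x [0..<n] \<in> l1_tree \<delta>"
    using branch_if_contains_l1[OF assms(3)] by blast
  have "map (L \<circ> x) [0..<n] \<in> l1_tree (\<delta> * c)" for n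
    using lift[OF \<delta> branch[of n]] by simp
  with \<delta> c show ?thesis by (intro contains_l1_if_branch[of "\<delta> * c"]) auto
qed

lemma l1_tree_rank_quotient:
  fixes Q :: "'y::banach \<Rightarrow> 'x::banach"
  assumes "bounded_linear Q" and "surj Q" and wo: "Well_order r"
    and rank_Y: "\<And>\<delta>. \<delta> \<ge> 1 \<Longrightarrow> rank_le (l1_tree \<delta> :: 'y list set) r"
    and \<delta>: "\<delta> \<ge> 1"
  shows "rank_le (l1_tree \<delta> :: 'x list set) r"
proof -
  obtain c and L :: "'x \<Rightarrow> 'y" where c: "c > 0"
    and lift: "\<And>\<delta> s. \<delta> > 0 \<Longrightarrow> s \<in> l1_tree \<delta> \<Longrightarrow> map L s \<in> l1_tree (\<delta> * c)"
    by (rule quotient_lifts_l1_trees[OF assms(1,2)]) blast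
  let ?\<delta>' = "max 1 (\<delta> * c)"
  have "map L s \<in> l1_tree ?\<delta>'" if "s \<in> l1_tree \<delta>" for s
    using lift[OF _ that] l1_tree_mono[of "\<delta> * c" ?\<delta>'] \<delta> c by auto
  then show ?thesis
    by (rule rank_le_tree_morphism[OF wo _ strict_prefix_map rank_Y]) (simp_all add: max.coboundedI1)
qed

(* In a space without l_1 copies, the l_1 tree restricted to a countable set of vectors is a
   countable tree without infinite branches, hence of countable rank. *)
lemma l1_tree_restrict_countable_rank:
  fixes D :: "'x::banach set"
  assumes no_l1: "\<not> contains_l1 TYPE('x)" and "countable D"
    and wo: "Well_order r" and unc: "\<not> countable (Field r)" and \<delta>: "\<delta> > 0"
  shows "rank_le (l1_tree \<delta> \<inter> lists D) r"
proof (rule rank_le_countable_tree[OF wo unc])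
  show "countable (l1_tree \<delta> \<inter> lists D)"
    using assms(2) by (intro countable_subset[OF _ countable_lists]) auto
  fix A assume A: "A \<noteq> {}" "A \<subseteq> l1_tree \<delta> \<inter> lists D" "A \<subseteq> tree_deriv A"
  then obtain x :: "nat \<Rightarrow> 'x" where "\<And>n. map x [0..<n] \<in> l1_tree \<delta>"
    using infinite_branch[OF A(1) _ A(3), of "l1_tree \<delta>"] l1_tree_take by blast
  with no_l1 \<delta> show False using contains_l1_if_branch by blast
qed

(* For separable X without l_1 copies, every l_1 tree has countable rank: perturbing into a
   countable dense set maps T(X,\<delta>) into the countable tree T(X,2\<delta>) restricted to that set. *)
lemma l1_tree_rank_separable:
  fixes r :: "'i rel"
  assumes "separable_space (euclidean :: 'x::banach topology)" and no_l1: "\<not> contains_l1 TYPE('x)"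
    and wo: "Well_order r" and unc: "\<not> countable (Field r)" and \<delta>: "\<delta> \<ge> 1"
  shows "rank_le (l1_tree \<delta> :: 'x list set) r"
proof -
  obtain D :: "'x set" where D: "countable D" "closure D = UNIV"
    using assms(1) unfolding separable_space_def by auto
  have "\<exists>y\<in>D. dist y x < 1 / (2 * \<delta>)" for x
  proof -
    have "\<forall>\<epsilon>>0. \<exists>y\<in>D. dist y x < \<epsilon>" using D(2) closure_approachable[of x D] by simp
    with \<delta> show ?thesis by simp
  qed
  then obtain d where d: "\<And>x. d x \<in> D" "\<And>x. dist (d x) x < 1 / (2 * \<delta>)" by metis
  have close: "norm (x - d x) \<le> 1 / (2 * \<delta>)" for x
    using d(2)[of x] by (simp add: dist_norm norm_minus_commute)
  have "map d s \<in> l1_tree (2 * \<delta>) \<inter> lists D" if "s \<in> l1_tree \<delta>" for s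
    using l1_tree_perturb[OF \<delta> close that] d(1) by auto
  then show ?thesis
    using \<delta> by (intro rank_le_tree_morphism[OF wo _ strict_prefix_map
        l1_tree_restrict_countable_rank[OF no_l1 D(1) wo unc]]) auto
qed

theorem lemma10:
  fixes Q :: "'y::banach \<Rightarrow> 'x::banach" and r :: "'i rel"
  assumes "separable_space (euclidean :: 'x topology)"
    and "separable_space (euclidean :: 'y topology)"
    and "bounded_linear Q" and "surj Q"
    and "Well_order r"
    and "phi_l1_le TYPE('y) r"
  shows "phi_l1_le TYPE('x) r"
proof (cases "contains_l1 TYPE('x)")
  case True
  then have "contains_l1 TYPE('y)" using contains_l1_quotient[OF assms(3,4)] by blast
  with True assms(6) show ?thesis unfolding phi_l1_le_def by simp
next
  case no_l1: False
  have "rank_le (l1_tree \<delta> :: 'x list set) r" if \<delta>: "\<delta> \<ge> 1" for \<delta>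
  proof (cases "contains_l1 TYPE('y)")
    case True
    with assms(6) have "(cardSuc natLeq, r) \<in> ordLeq" unfolding phi_l1_le_def by simp
    then have "\<not> countable (Field r)" by (rule uncountable_field_if_omega1_le)
    then show ?thesis by (rule l1_tree_rank_separable[OF assms(1) no_l1 assms(5) _ \<delta>])
  next
    case False
    with assms(6) have "\<And>\<delta>. \<delta> \<ge> 1 \<Longrightarrow> rank_le (l1_tree \<delta> :: 'y list set) r"
      unfolding phi_l1_le_def by simp
    then show ?thesis by (rule l1_tree_rank_quotient[OF assms(3,4,5) _ \<delta>])
  qed
  with no_l1 show ?thesis unfolding phi_l1_le_def by simp
qed

end
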